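(* There is no semi-planar function $f:\mathbb{Z}_6\to\mathbb{Z}_6$.
   Context: $\mathbb{Z}_6$ denotes the additive cyclic group of integers modulo $6$. A function $f:\mathbb{Z}_6\to\mathbb{Z}_6$ is semi-planar if for every non-zero $a\in\mathbb{Z}_6$ and every $y\in\mathbb{Z}_6$, the equation $f(x+a)-f(x)=y$ has either $0$ or $2$ solutions $x\in\mathbb{Z}_6$. *)

theory Defs
  imports Main "HOL-Library.Numeral_Type"
begin

text \<open>Z_6 is modelled by the numeral type 6 from HOL-Library.Numeral_Type
(integers modulo 6 with + and -).\<close>

definition semi_planar :: "(6 \<Rightarrow> 6) \<Rightarrow> bool" where
  "semi_planar f \<longleftrightarrow>
     (\<forall>a::6. a \<noteq> 0 \<longrightarrow> (\<forall>y::6.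
        card {x::6. f (x + a) - f x = y} = 0 \<or> card {x::6. f (x + a) - f x = y} = 2))"

end

theory Submission
  imports Defs
begin

text \<open>Adding an affine function \<open>c * x + d\<close> to \<open>f\<close> only translates the values of every
difference function \<open>f (x + a) - f x\<close>, so a semi-planar function may be normalised to
\<open>f 0 = f 1 = 0\<close>. The remaining \<open>6\<^sup>4\<close> candidates are excluded by an exhaustive
computation, which only needs the shifts \<open>a = 1, 2, 3\<close>.\<close>

lemma Rep_bit0_of_nat: "Rep_bit0 (of_nat n :: 'a::finite bit0) = int n mod int CARD('a bit0)"
  by (simp only: bit0.of_nat_eq bit0.Rep_Abs_mod)

lemma Rep_bit0_of_int: "Rep_bit0 (of_int z :: 'a::finite bit0) = z mod int CARD('a bit0)"
  by (simp only: bit0.of_int_eq bit0.Rep_Abs_mod)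

lemma Rep_bit0_diff:
  "Rep_bit0 (p - q :: 'a::finite bit0) = (Rep_bit0 p - Rep_bit0 q) mod int CARD('a bit0)"
  unfolding minus_bit0_def Abs_bit0'_def by (rule bit0.Rep_Abs_mod)

lemma of_nat_mod_CARD_bit0: "(of_nat (n mod CARD('a::finite bit0)) :: 'a bit0) = of_nat n"
  by (simp add: bit0.Rep_inject_sym Rep_bit0_of_nat zmod_int)

lemma card_Collect_bit0:
  "card {x :: 'a::finite bit0. P x} = length (filter (\<lambda>i. P (of_nat i)) [0..<CARD('a bit0)])"
proof -
  let ?xs = "map (of_nat :: nat \<Rightarrow> 'a bit0) [0..<CARD('a bit0)]"
  have "inj_on (of_nat :: nat \<Rightarrow> 'a bit0) {0..<CARD('a bit0)}"
    by (auto simp: inj_on_def bit0.Rep_inject_sym Rep_bit0_of_nat)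
  then have "distinct ?xs"
    by (simp add: distinct_map)
  moreover have "set ?xs = UNIV"
  proof -
    have "x \<in> set ?xs" for x :: "'a bit0"
    proof -
      have "of_int (Rep_bit0 x) = x"
        by (simp only: bit0.of_int_eq bit0.Rep_mod bit0.Rep_inverse)
      with Rep_bit0[of x] show ?thesis
        by (auto simp: image_iff intro!: bexI[of _ "nat (Rep_bit0 x)"])
    qed
    then show ?thesis
      by blast
  qed
  ultimately have "length (filter P ?xs) = card {x. P x}"
    using distinct_length_filter[of ?xs P] by simp
  then show ?thesis
    by (simp add: filter_map comp_def)
qed

lemma semi_planar_add_affine:
  fixes f :: "6 \<Rightarrow> 6"
  assumes "semi_planar f"
  shows "semi_planar (\<lambda>x. f x + c * x + d)"
  unfolding semi_planar_def
proof (intro allI impI)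
  fix a y :: 6
  assume "a \<noteq> 0"
  have "{x. (f (x + a) + c * (x + a) + d) - (f x + c * x + d) = y} = {x. f (x + a) - f x = y - c * a}"
    by (auto simp: algebra_simps)
  with assms \<open>a \<noteq> 0\<close> show "card {x. (f (x + a) + c * (x + a) + d) - (f x + c * x + d) = y} = 0 \<or>
      card {x. (f (x + a) + c * (x + a) + d) - (f x + c * x + d) = y} = 2"
    unfolding semi_planar_def by simp
qed

definition semi_planar_table :: "int list \<Rightarrow> bool" where
  "semi_planar_table v \<longleftrightarrow> (\<forall>k\<in>{1, 2, 3}. \<forall>j\<in>{0..5}.
     length (filter (\<lambda>i. (v ! ((i + k) mod 6) - v ! i) mod 6 = j) [0..<6]) \<in> {0, 2})"

lemma semi_planar_imp_table:
  fixes f :: "6 \<Rightarrow> 6"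
  assumes "semi_planar f"
  shows "semi_planar_table (map (\<lambda>i. Rep_bit0 (f (of_nat i))) [0..<6])"
  unfolding semi_planar_table_def
proof (intro ballI)
  fix k :: nat and j :: int
  assume "k \<in> {1, 2, 3}" and "j \<in> {0..5}"
  let ?v = "map (\<lambda>i. Rep_bit0 (f (of_nat i))) [0..<6]"
  have "of_nat k \<noteq> (0 :: 6)"
    using \<open>k \<in> {1, 2, 3}\<close> by (auto simp: bit0.Rep_inject_sym Rep_bit0_of_nat bit0.Rep_0)
  with \<open>semi_planar f\<close> have "card {x. f (x + of_nat k) - f x = of_int j} \<in> {0, 2}"
    unfolding semi_planar_def by simp
  moreover have "card {x. f (x + of_nat k) - f x = of_int j} =
      length (filter (\<lambda>i. (?v ! ((i + k) mod 6) - ?v ! i) mod 6 = j) [0..<6])"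
    unfolding card_Collect_bit0
  proof (intro arg_cong[where f = length] filter_cong)
    fix i
    assume "i \<in> set [0..<6]"
    then have "i < 6" by simp
    have "f (of_nat i + of_nat k) - f (of_nat i) = of_int j \<longleftrightarrow>
        Rep_bit0 (f (of_nat i + of_nat k) - f (of_nat i)) = Rep_bit0 (of_int j :: 6)"
      by (simp only: bit0.Rep_inject_sym)
    also have "\<dots> \<longleftrightarrow> (?v ! ((i + k) mod 6) - ?v ! i) mod 6 = j"
      using \<open>i < 6\<close> \<open>j \<in> {0..5}\<close>
      by (simp add: Rep_bit0_diff Rep_bit0_of_int
          of_nat_mod_CARD_bit0[where 'a = 3, simplified] flip: of_nat_add)
    finally show "f (of_nat i + of_nat k) - f (of_nat i) = of_int j \<longleftrightarrow>
        (?v ! ((i + k) mod 6) - ?v ! i) mod 6 = j" .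
  qed simp
  ultimately show "length (filter (\<lambda>i. (?v ! ((i + k) mod 6) - ?v ! i) mod 6 = j) [0..<6]) \<in> {0, 2}"
    by simp
qed

lemma not_semi_planar_table_0_0:
  assumes "b \<in> {0..5}" and "c \<in> {0..5}" and "d \<in> {0..5}" and "e \<in> {0..5}"
  shows "\<not> semi_planar_table [0, 0, b, c, d, e]"
proof -
  have "\<forall>b\<in>{0..5}. \<forall>c\<in>{0..5}. \<forall>d\<in>{0..5}. \<forall>e\<in>{0..5::int}. \<not> semi_planar_table [0, 0, b, c, d, e]"
    \<comment> \<open>integer intervals are turned into lists first; evaluating them as sets is far slower\<close>
    unfolding semi_planar_table_def set_upto[symmetric] by code_simp
  with assms show ?thesis
    by blast
qed

theorem theorem5:
  shows "\<not> (\<exists>f :: 6 \<Rightarrow> 6. semi_planar f)"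
proof
  assume "\<exists>f :: 6 \<Rightarrow> 6. semi_planar f"
  then obtain f :: "6 \<Rightarrow> 6" where "semi_planar f" ..
  define g where "g x = f x + (f 0 - f 1) * x + - f 0" for x
  have "semi_planar g"
    unfolding g_def[abs_def] by (rule semi_planar_add_affine) fact
  define v where "v = map (\<lambda>i. Rep_bit0 (g (of_nat i))) [0..<6]"
  have "semi_planar_table v"
    unfolding v_def by (rule semi_planar_imp_table) fact
  moreover have "v = [0, 0, v ! 2, v ! 3, v ! 4, v ! 5]"
    by (simp add: v_def g_def upt_rec bit0.Rep_0)
  moreover have "v ! i \<in> {0..5}" if "i < 6" for i
    using that Rep_bit0[of "g (of_nat i)"] by (simp add: v_def)
  ultimately show False
    using not_semi_planar_table_0_0[of "v ! 2" "v ! 3" "v ! 4" "v ! 5"] by simp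
qed

end
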